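(* Let $\{(G_\alpha,d_\alpha)\}_{\alpha\in\mathbb I}$ be a strict long directed family of metrizable topological groups, $d_\alpha$ a compatible metric on $G_\alpha$, whose bonding maps (inclusions $G_\alpha\to G_\beta$, $\alpha\leq\beta$, which are group homomorphisms) are Lipschitz with a fixed constant $L>0$ (in particular, isometries). Then $\{G_\alpha\}_{\alpha\in\mathbb I}$ satisfies ACP, and the colimit space topology on $G=\bigcup_\alpha G_\alpha$ is generated by the metric $$d(x,y):=\limsup_{\alpha\in\mathbb I}d_\alpha(x,y)=\inf_{\alpha\in\mathbb I}\sup\{d_\beta(x,y)\mid x,y\in G_\beta,\ \beta\geq\alpha\}.$$
   Context: Strict means the bonding maps are topological embeddings; long means every countable subset of $\mathbb I$ has an upper bound. The colimit space topology is $\mathscr T=\{U\subseteq G\mid U\cap G_\alpha\text{ open in }G_\alpha\ \forall\alpha\}$. ACP means $\mathscr T$ coincides with the finest group topology on $G$ making all inclusions continuous (equivalently, $(G,\mathscr T)$ is a topological group). *)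

theory Defs
  imports "HOL-Analysis.Analysis"
begin

text \<open>Groups are modelled as subsets of an ambient group type (class group_add,
  not necessarily commutative); the bonding maps are then the set inclusions,
  which are automatically group homomorphisms.\<close>

definition subgroup_add :: "'g::group_add set \<Rightarrow> bool" where
  "subgroup_add S \<longleftrightarrow> 0 \<in> S \<and> (\<forall>x\<in>S. \<forall>y\<in>S. x + y \<in> S) \<and> (\<forall>x\<in>S. - x \<in> S)"

definition topological_group_on :: "'g::group_add topology \<Rightarrow> bool" where
  "topological_group_on X \<longleftrightarrow> subgroup_add (topspace X)
     \<and> continuous_map (prod_topology X X) X (\<lambda>(x, y). x + y)
     \<and> continuous_map X X uminus"

definition directed_index :: "'i set \<Rightarrow> ('i \<Rightarrow> 'i \<Rightarrow> bool) \<Rightarrow> bool" where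
  "directed_index I le \<longleftrightarrow> I \<noteq> {} \<and> (\<forall>a\<in>I. le a a)
     \<and> (\<forall>a\<in>I. \<forall>b\<in>I. \<forall>c\<in>I. le a b \<longrightarrow> le b c \<longrightarrow> le a c)
     \<and> (\<forall>a\<in>I. \<forall>b\<in>I. \<exists>c\<in>I. le a c \<and> le b c)"

definition long_index :: "'i set \<Rightarrow> ('i \<Rightarrow> 'i \<Rightarrow> bool) \<Rightarrow> bool" where
  "long_index I le \<longleftrightarrow> (\<forall>C. C \<subseteq> I \<and> countable C \<longrightarrow> (\<exists>u\<in>I. \<forall>c\<in>C. le c u))"

definition colimit_topology :: "'i set \<Rightarrow> ('i \<Rightarrow> 'g topology) \<Rightarrow> 'g topology" where
  "colimit_topology I T = topology (\<lambda>U. U \<subseteq> (\<Union>a\<in>I. topspace (T a))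
      \<and> (\<forall>a\<in>I. openin (T a) (U \<inter> topspace (T a))))"

definition ACP :: "'i set \<Rightarrow> ('i \<Rightarrow> 'g::group_add topology) \<Rightarrow> bool" where
  "ACP I T \<longleftrightarrow>
     (let C = colimit_topology I T; G = (\<Union>a\<in>I. topspace (T a)) in
       topological_group_on C \<and> topspace C = G
       \<and> (\<forall>a\<in>I. continuous_map (T a) C id)
       \<and> (\<forall>S. topological_group_on S \<and> topspace S = G
              \<and> (\<forall>a\<in>I. continuous_map (T a) S id)
              \<longrightarrow> (\<forall>U. openin S U \<longrightarrow> openin C U)))"

definition limsup_metric ::
  "'i set \<Rightarrow> ('i \<Rightarrow> 'i \<Rightarrow> bool) \<Rightarrow> ('i \<Rightarrow> 'g set) \<Rightarrow> ('i \<Rightarrow> 'g \<Rightarrow> 'g \<Rightarrow> real) \<Rightarrow> 'g \<Rightarrow> 'g \<Rightarrow> real" where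
  "limsup_metric I le G d x y = real_of_ereal
     (INF a\<in>I. SUP b\<in>{b\<in>I. le a b \<and> x \<in> G b \<and> y \<in> G b}. ereal (d b x y))"

end

theory Submission
  imports Defs
begin

text \<open>The Lipschitz bound gives \<open>D \<le> L * d\<^sub>\<alpha>\<close> on \<open>G\<^sub>\<alpha>\<close> for the limsup metric \<open>D\<close>, so \<open>D\<close> is
  finite and every inclusion \<open>G\<^sub>\<alpha> \<rightarrow> (G, D)\<close> is continuous. Conversely, since the index set
  is long, the countably many indices that control the terms of a \<open>D\<close>-convergent sequence
  have a common upper bound \<open>\<beta>\<close>, and the sequence already converges in \<open>G\<^sub>\<beta>\<close>. As metric
  topologies are sequential, this identifies the \<open>D\<close>-topology with the colimit topology and
  makes the group operations continuous, because they are continuous on each \<open>G\<^sub>\<beta>\<close>. Being the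
  colimit topology, it is then the finest group topology making all inclusions continuous.\<close>

lemma (in Metric_space) continuous_map_from_mtopology_sequentially:
  assumes "f \<in> M \<rightarrow> topspace Y"
    and "\<And>\<sigma> l. range \<sigma> \<subseteq> M \<Longrightarrow> limitin mtopology \<sigma> l sequentially
           \<Longrightarrow> limitin Y (f \<circ> \<sigma>) (f l) sequentially"
  shows "continuous_map mtopology Y f"
  unfolding continuous_map_closedin
proof (intro conjI allI impI)
  show "f \<in> topspace mtopology \<rightarrow> topspace Y"
    using assms(1) by simp
  fix C assume C: "closedin Y C"
  show "closedin mtopology {x \<in> topspace mtopology. f x \<in> C}"
    unfolding metric_closedin_iff_sequentially_closed
  proof (intro conjI allI impI)
    fix \<sigma> l assume \<sigma>: "range \<sigma> \<subseteq> {x \<in> topspace mtopology. f x \<in> C} \<and> limitin mtopology \<sigma> l sequentially"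
    then have "f l \<in> C"
      by (intro limitin_closedin[OF assms(2) C]) (auto simp: image_subset_iff always_eventually)
    with \<sigma> show "l \<in> {x \<in> topspace mtopology. f x \<in> C}"
      using limitin_mspace by auto
  qed auto
qed

locale long_Lipschitz_family =
  fixes I :: "'i set" and le :: "'i \<Rightarrow> 'i \<Rightarrow> bool"
    and G :: "'i \<Rightarrow> 'g set" and d :: "'i \<Rightarrow> 'g \<Rightarrow> 'g \<Rightarrow> real" and L :: real
  assumes dir: "directed_index I le"
    and long: "long_index I le"
    and metric: "\<And>a. a \<in> I \<Longrightarrow> Metric_space (G a) (d a)"
    and mono: "\<And>a b. a \<in> I \<Longrightarrow> b \<in> I \<Longrightarrow> le a b \<Longrightarrow> G a \<subseteq> G b"
    and lip: "\<And>a b x y. a \<in> I \<Longrightarrow> b \<in> I \<Longrightarrow> le a b \<Longrightarrow> x \<in> G a \<Longrightarrow> y \<in> G a \<Longrightarrow>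
       d b x y \<le> L * d a x y"
begin

abbreviation T :: "'i \<Rightarrow> 'g topology" where
  "T a \<equiv> Metric_space.mtopology (G a) (d a)"

abbreviation G_union :: "'g set" where
  "G_union \<equiv> \<Union>a\<in>I. G a"

abbreviation D :: "'g \<Rightarrow> 'g \<Rightarrow> real" where
  "D \<equiv> limsup_metric I le G d"

abbreviation T_union :: "'g topology" where
  "T_union \<equiv> Metric_space.mtopology G_union D"

definition eventually_tail :: "('i \<Rightarrow> bool) \<Rightarrow> bool" where
  "eventually_tail P \<longleftrightarrow> (\<exists>a\<in>I. \<forall>b\<in>I. le a b \<longrightarrow> P b)"

definition tail_sup :: "'g \<Rightarrow> 'g \<Rightarrow> 'i \<Rightarrow> ereal" where
  "tail_sup x y a = (SUP b\<in>{b\<in>I. le a b \<and> x \<in> G b \<and> y \<in> G b}. ereal (d b x y))"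

lemma topspace_T: "a \<in> I \<Longrightarrow> topspace (T a) = G a"
  using Metric_space.topspace_mtopology[OF metric] by blast

lemma index_refl: "a \<in> I \<Longrightarrow> le a a"
  using dir unfolding directed_index_def by blast

lemma index_trans: "a \<in> I \<Longrightarrow> b \<in> I \<Longrightarrow> c \<in> I \<Longrightarrow> le a b \<Longrightarrow> le b c \<Longrightarrow> le a c"
  using dir unfolding directed_index_def by blast

lemma index_upper_bound: "a \<in> I \<Longrightarrow> b \<in> I \<Longrightarrow> \<exists>c\<in>I. le a c \<and> le b c"
  using dir unfolding directed_index_def by blast

lemma eventually_tail_above:
  assumes "eventually_tail P" "a \<in> I"
  shows "\<exists>b\<in>I. le a b \<and> P b"
proof -
  obtain a' where a': "a' \<in> I" "\<forall>b\<in>I. le a' b \<longrightarrow> P b"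
    using assms(1) unfolding eventually_tail_def by blast
  obtain c where "c \<in> I" "le a c" "le a' c"
    using index_upper_bound[OF assms(2) a'(1)] by blast
  with a' show ?thesis
    by blast
qed

lemma eventually_tail_exists: "eventually_tail P \<Longrightarrow> \<exists>b\<in>I. P b"
  unfolding eventually_tail_def using index_refl by blast

lemma eventually_tail_conj:
  assumes "eventually_tail P" "eventually_tail Q"
  shows "eventually_tail (\<lambda>b. P b \<and> Q b)"
proof -
  obtain a1 a2 where a: "a1 \<in> I" "a2 \<in> I"
    and P: "\<forall>b\<in>I. le a1 b \<longrightarrow> P b" and Q: "\<forall>b\<in>I. le a2 b \<longrightarrow> Q b"
    using assms unfolding eventually_tail_def by blast
  obtain c where c: "c \<in> I" "le a1 c" "le a2 c"
    using index_upper_bound[OF a] by blast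
  have "P b \<and> Q b" if "b \<in> I" "le c b" for b
    using P Q index_trans[OF a(1) c(1) that(1) c(2) that(2)]
      index_trans[OF a(2) c(1) that(1) c(3) that(2)] that(1) by blast
  with c(1) show ?thesis
    unfolding eventually_tail_def by blast
qed

lemma eventually_tail_mono:
  "eventually_tail P \<Longrightarrow> (\<And>b. b \<in> I \<Longrightarrow> P b \<Longrightarrow> Q b) \<Longrightarrow> eventually_tail Q"
  unfolding eventually_tail_def by blast

lemma eventually_tail_all_nat:
  assumes "\<And>n::nat. eventually_tail (P n)"
  shows "eventually_tail (\<lambda>b. \<forall>n. P n b)"
proof -
  obtain a where a: "\<And>n. a n \<in> I" "\<And>n b. b \<in> I \<Longrightarrow> le (a n) b \<Longrightarrow> P n b"
    using assms unfolding eventually_tail_def by metis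
  have "range a \<subseteq> I"
    using a(1) by blast
  then obtain u where u: "u \<in> I" "\<And>n. le (a n) u"
    using long[unfolded long_index_def, rule_format, of "range a"] by blast
  have "P n b" if "b \<in> I" "le u b" for n b
    using a(2)[OF that(1) index_trans[OF a(1) u(1) that(1) u(2) that(2)]] .
  with u(1) show ?thesis
    unfolding eventually_tail_def by blast
qed

lemma eventually_tail_mem: "x \<in> G_union \<Longrightarrow> eventually_tail (\<lambda>b. x \<in> G b)"
  unfolding eventually_tail_def using mono by blast

lemma eventually_tail_mem2:
  "x \<in> G_union \<Longrightarrow> y \<in> G_union \<Longrightarrow> eventually_tail (\<lambda>b. x \<in> G b \<and> y \<in> G b)"
  by (intro eventually_tail_conj eventually_tail_mem)

lemma limsup_metric_eq_INF: "D x y = real_of_ereal (INF a\<in>I. tail_sup x y a)"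
  by (simp add: limsup_metric_def tail_sup_def)

lemma tail_sup_le_Lipschitz:
  "a \<in> I \<Longrightarrow> x \<in> G a \<Longrightarrow> y \<in> G a \<Longrightarrow> tail_sup x y a \<le> ereal (L * d a x y)"
  unfolding tail_sup_def by (rule SUP_least) (auto intro: lip)

lemma tail_sup_ge:
  "b \<in> I \<Longrightarrow> le a b \<Longrightarrow> x \<in> G b \<Longrightarrow> y \<in> G b \<Longrightarrow> ereal (d b x y) \<le> tail_sup x y a"
  unfolding tail_sup_def by (rule SUP_upper) auto

lemma tail_sup_nonneg:
  assumes "x \<in> G_union" "y \<in> G_union" "a \<in> I"
  shows "0 \<le> tail_sup x y a"
proof -
  obtain b where b: "b \<in> I" "le a b" "x \<in> G b" "y \<in> G b"
    using eventually_tail_above[OF eventually_tail_mem2] assms by blast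
  have "0 \<le> ereal (d b x y)"
    using Metric_space.nonneg[OF metric[OF b(1)]] by simp
  also have "\<dots> \<le> tail_sup x y a"
    using tail_sup_ge b by blast
  finally show ?thesis .
qed

lemma INF_tail_sup_eq:
  assumes xy: "x \<in> G_union" "y \<in> G_union"
  shows "(INF a\<in>I. tail_sup x y a) = ereal (D x y)"
proof -
  obtain a where a: "a \<in> I" "x \<in> G a" "y \<in> G a"
    using eventually_tail_exists[OF eventually_tail_mem2[OF xy]] by blast
  have "(INF a\<in>I. tail_sup x y a) \<le> ereal (L * d a x y)"
    using INF_lower[OF a(1)] tail_sup_le_Lipschitz[OF a] by (rule order_trans)
  moreover have "0 \<le> (INF a\<in>I. tail_sup x y a)"
    using tail_sup_nonneg[OF xy] by (simp add: le_INF_iff)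
  ultimately show ?thesis
    unfolding limsup_metric_eq_INF by (cases "INF a\<in>I. tail_sup x y a") auto
qed

lemma limsup_metric_le_Lipschitz:
  assumes "a \<in> I" "x \<in> G a" "y \<in> G a"
  shows "D x y \<le> L * d a x y"
proof -
  have "x \<in> G_union" "y \<in> G_union"
    using assms by blast+
  then have "ereal (D x y) \<le> tail_sup x y a"
    using INF_tail_sup_eq INF_lower[OF assms(1), of "tail_sup x y"] by simp
  also have "\<dots> \<le> ereal (L * d a x y)"
    using tail_sup_le_Lipschitz[OF assms] .
  finally show ?thesis by simp
qed

lemma limsup_metric_less_imp_eventually:
  assumes xy: "x \<in> G_union" "y \<in> G_union" and "D x y < r"
  shows "eventually_tail (\<lambda>b. x \<in> G b \<and> y \<in> G b \<and> d b x y < r)"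
proof -
  have "(INF a\<in>I. tail_sup x y a) < ereal r"
    using INF_tail_sup_eq[OF xy] assms(3) by simp
  then obtain a where a: "a \<in> I" "tail_sup x y a < ereal r"
    by (auto simp: INF_less_iff)
  have "eventually_tail (le a)"
    unfolding eventually_tail_def using a(1) by blast
  then have "eventually_tail (\<lambda>b. le a b \<and> x \<in> G b \<and> y \<in> G b)"
    using eventually_tail_conj eventually_tail_mem2[OF xy] by presburger
  then show ?thesis
  proof (rule eventually_tail_mono)
    fix b assume "b \<in> I" "le a b \<and> x \<in> G b \<and> y \<in> G b"
    then have "ereal (d b x y) < ereal r"
      using tail_sup_ge a(2) by (meson order.strict_trans1)
    then show "x \<in> G b \<and> y \<in> G b \<and> d b x y < r"
      using \<open>le a b \<and> x \<in> G b \<and> y \<in> G b\<close> by simp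
  qed
qed

lemma limsup_metric_le_if_eventually:
  assumes xy: "x \<in> G_union" "y \<in> G_union"
    and "eventually_tail (\<lambda>b. x \<in> G b \<longrightarrow> y \<in> G b \<longrightarrow> d b x y \<le> s)"
  shows "D x y \<le> s"
proof -
  obtain a where a: "a \<in> I" "\<And>b. b \<in> I \<Longrightarrow> le a b \<Longrightarrow> x \<in> G b \<Longrightarrow> y \<in> G b \<Longrightarrow> d b x y \<le> s"
    using assms(3) unfolding eventually_tail_def by blast
  have "tail_sup x y a \<le> ereal s"
    unfolding tail_sup_def by (rule SUP_least) (use a in auto)
  then have "(INF a\<in>I. tail_sup x y a) \<le> ereal s"
    using INF_lower2[OF a(1)] by blast
  then show ?thesis
    using INF_tail_sup_eq[OF xy] by simp
qed

text \<open>Off the union some tail supremum is taken over the empty set; the infimum is then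
  \<open>-\<infinity>\<close>, which \<open>real_of_ereal\<close> sends to \<open>0\<close>.\<close>
lemma limsup_metric_nonneg: "0 \<le> D x y"
proof (cases "\<exists>a\<in>I. tail_sup x y a < 0")
  case True
  then obtain a where a: "a \<in> I" "tail_sup x y a < 0" by blast
  have "{b\<in>I. le a b \<and> x \<in> G b \<and> y \<in> G b} = {}"
  proof (rule ccontr)
    assume "{b\<in>I. le a b \<and> x \<in> G b \<and> y \<in> G b} \<noteq> {}"
    then obtain b where "b \<in> I" "le a b" "x \<in> G b" "y \<in> G b" by blast
    then have "ereal (d b x y) \<le> tail_sup x y a" "0 \<le> d b x y"
      using tail_sup_ge Metric_space.nonneg[OF metric] by blast+
    then have "0 \<le> tail_sup x y a"
      by (metis ereal_less_eq(5) order_trans)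
    with a(2) show False by simp
  qed
  then have "tail_sup x y a = -\<infinity>"
    unfolding tail_sup_def by (simp only: SUP_empty bot_ereal_def)
  then have "(INF a\<in>I. tail_sup x y a) = -\<infinity>"
    using INF_lower[OF a(1), of "tail_sup x y"] by simp
  then show ?thesis
    by (simp add: limsup_metric_eq_INF)
next
  case False
  then show ?thesis
    by (simp add: limsup_metric_eq_INF real_of_ereal_pos le_INF_iff not_less)
qed

lemma limsup_metric_commute: "D x y = D y x"
  unfolding limsup_metric_def
proof (intro arg_cong[where f=real_of_ereal] INF_cong refl SUP_cong)
  fix a b assume "b \<in> {b\<in>I. le a b \<and> y \<in> G b \<and> x \<in> G b}"
  then show "ereal (d b x y) = ereal (d b y x)"
    using Metric_space.commute[OF metric] by simp
qed auto

lemma limsup_metric_eq_0_iff: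
  assumes xy: "x \<in> G_union" "y \<in> G_union"
  shows "D x y = 0 \<longleftrightarrow> x = y"
proof
  assume "x = y"
  obtain a where a: "a \<in> I" "x \<in> G a"
    using xy by blast
  show "D x y = 0"
    using limsup_metric_le_Lipschitz[OF a a(2)] limsup_metric_nonneg[of x y]
      Metric_space.zero[OF metric[OF a(1)] a(2) a(2)] \<open>x = y\<close> by simp
next
  assume "D x y = 0"
  then have "eventually_tail (\<lambda>b. x \<in> G b \<and> y \<in> G b \<and> d b x y < inverse (real (Suc n)))" for n
    by (intro limsup_metric_less_imp_eventually[OF xy]) simp
  then have "eventually_tail (\<lambda>b. \<forall>n. x \<in> G b \<and> y \<in> G b \<and> d b x y < inverse (real (Suc n)))"
    by (rule eventually_tail_all_nat)
  then obtain b where b: "b \<in> I" "x \<in> G b" "y \<in> G b" "\<And>n. d b x y < inverse (real (Suc n))"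
    using eventually_tail_exists by blast
  have "d b x y \<le> 0"
    using b(4) reals_Archimedean by (meson not_le order.asym)
  then show "x = y"
    using Metric_space.zero[OF metric[OF b(1)] b(2,3)] Metric_space.nonneg[OF metric[OF b(1)]]
    by (meson order.antisym)
qed

lemma limsup_metric_triangle:
  assumes xyz: "x \<in> G_union" "y \<in> G_union" "z \<in> G_union"
  shows "D x z \<le> D x y + D y z"
proof (rule field_le_epsilon)
  fix e :: real assume "0 < e"
  then have close: "eventually_tail (\<lambda>b. (x \<in> G b \<and> y \<in> G b \<and> d b x y < D x y + e/2)
      \<and> (y \<in> G b \<and> z \<in> G b \<and> d b y z < D y z + e/2))"
    by (intro eventually_tail_conj limsup_metric_less_imp_eventually xyz) auto
  have "eventually_tail (\<lambda>b. x \<in> G b \<longrightarrow> z \<in> G b \<longrightarrow> d b x z \<le> D x y + D y z + e)"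
  proof (rule eventually_tail_mono[OF close])
    fix b assume "b \<in> I" and b: "(x \<in> G b \<and> y \<in> G b \<and> d b x y < D x y + e/2)
      \<and> (y \<in> G b \<and> z \<in> G b \<and> d b y z < D y z + e/2)"
    then have "d b x z \<le> d b x y + d b y z"
      using Metric_space.triangle[OF metric] by blast
    with b show "x \<in> G b \<longrightarrow> z \<in> G b \<longrightarrow> d b x z \<le> D x y + D y z + e"
      by linarith
  qed
  then show "D x z \<le> D x y + D y z + e"
    by (rule limsup_metric_le_if_eventually[OF xyz(1,3)])
qed

lemma Metric_space_limsup_metric: "Metric_space G_union D"
  by unfold_locales
    (use limsup_metric_nonneg limsup_metric_commute limsup_metric_eq_0_iff
      limsup_metric_triangle in auto)

lemma limitin_eventually_stage:
  assumes "limitin T_union \<sigma> l sequentially"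
  shows "eventually_tail (\<lambda>v. limitin (T v) \<sigma> l sequentially)"
proof -
  have l: "l \<in> G_union" and ev: "eventually (\<lambda>n. \<sigma> n \<in> G_union) sequentially"
    and D0: "((\<lambda>n. D (\<sigma> n) l) \<longlongrightarrow> 0) sequentially"
    using assms unfolding Metric_space.limitin_metric_dist_null[OF Metric_space_limsup_metric] by auto
  define bound where "bound n v \<longleftrightarrow> l \<in> G v \<and> (\<sigma> n \<in> G_union \<longrightarrow>
      \<sigma> n \<in> G v \<and> d v (\<sigma> n) l < D (\<sigma> n) l + inverse (real (Suc n)))" for n v
  have "eventually_tail (bound n)" for n
  proof (cases "\<sigma> n \<in> G_union")
    case True
    have "eventually_tail (\<lambda>b. \<sigma> n \<in> G b \<and> l \<in> G b
        \<and> d b (\<sigma> n) l < D (\<sigma> n) l + inverse (real (Suc n)))"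
      by (rule limsup_metric_less_imp_eventually[OF True l]) simp
    then show ?thesis
      by (rule eventually_tail_mono) (auto simp: bound_def)
  next
    case False
    then have "bound n = (\<lambda>v. l \<in> G v)"
      by (simp add: bound_def fun_eq_iff)
    then show ?thesis
      using eventually_tail_mem[OF l] by simp
  qed
  then have "eventually_tail (\<lambda>v. \<forall>n. bound n v)"
    by (rule eventually_tail_all_nat)
  then show ?thesis
  proof (rule eventually_tail_mono)
    fix v assume v: "v \<in> I" and bound: "\<forall>n. bound n v"
    interpret Mv: Metric_space "G v" "d v"
      by (rule metric[OF v])
    have majorant: "((\<lambda>n. D (\<sigma> n) l + inverse (real (Suc n))) \<longlongrightarrow> 0) sequentially"
      using tendsto_add[OF D0 LIMSEQ_inverse_real_of_nat] by simp
    have "eventually (\<lambda>n. norm (d v (\<sigma> n) l) \<le> D (\<sigma> n) l + inverse (real (Suc n))) sequentially"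
      using ev
    proof (rule eventually_mono)
      fix n assume "\<sigma> n \<in> G_union"
      then show "norm (d v (\<sigma> n) l) \<le> D (\<sigma> n) l + inverse (real (Suc n))"
        using bound by (simp add: bound_def less_imp_le)
    qed
    then have "((\<lambda>n. d v (\<sigma> n) l) \<longlongrightarrow> 0) sequentially"
      using majorant by (rule Lim_null_comparison)
    moreover have "eventually (\<lambda>n. \<sigma> n \<in> G v) sequentially"
      using ev by (rule eventually_mono) (use bound in \<open>simp add: bound_def\<close>)
    ultimately show "limitin Mv.mtopology \<sigma> l sequentially"
      using bound unfolding Mv.limitin_metric_dist_null bound_def by blast
  qed
qed

lemma topspace_T_union [simp]: "topspace T_union = G_union"
  by (rule Metric_space.topspace_mtopology[OF Metric_space_limsup_metric])

lemma continuous_map_stage_inclusion: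
  assumes a: "a \<in> I"
  shows "continuous_map (T a) T_union id"
proof -
  interpret Ma: Metric_space "G a" "d a"
    by (rule metric[OF a])
  show ?thesis
  proof (rule Ma.continuous_map_from_mtopology_sequentially)
    show "id \<in> G a \<rightarrow> topspace T_union"
      using a by fastforce
    fix \<sigma> l assume \<sigma>: "range \<sigma> \<subseteq> G a" and lim: "limitin Ma.mtopology \<sigma> l sequentially"
    have l: "l \<in> G a"
      using lim Ma.limitin_mspace by blast
    have Ld: "((\<lambda>n. L * d a (\<sigma> n) l) \<longlongrightarrow> 0) sequentially"
      using lim unfolding Ma.limitin_metric_dist_null by (auto intro: tendsto_mult_right_zero)
    have bound: "norm (D (\<sigma> n) l) \<le> L * d a (\<sigma> n) l" for n
    proof -
      have "\<sigma> n \<in> G a"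
        using \<sigma> by blast
      then show ?thesis
        using limsup_metric_le_Lipschitz[OF a _ l] limsup_metric_nonneg[of "\<sigma> n" l] by simp
    qed
    have "((\<lambda>n. D (\<sigma> n) l) \<longlongrightarrow> 0) sequentially"
      by (rule Lim_null_comparison[OF always_eventually[OF allI[OF bound]] Ld])
    moreover have "\<forall>n. \<sigma> n \<in> G_union" "l \<in> G_union"
      using \<sigma> l a by blast+
    ultimately show "limitin T_union (id \<circ> \<sigma>) (id l) sequentially"
      unfolding Metric_space.limitin_metric_dist_null[OF Metric_space_limsup_metric]
      by (simp add: always_eventually)
  qed
qed

lemma limitin_stage_imp_limitin:
  "v \<in> I \<Longrightarrow> limitin (T v) \<sigma> l F \<Longrightarrow> limitin T_union \<sigma> l F"
  using continuous_map_limit[OF continuous_map_stage_inclusion] by (simp add: comp_def)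

lemma openin_limsup_metric_iff:
  "openin T_union U \<longleftrightarrow> U \<subseteq> G_union \<and> (\<forall>a\<in>I. openin (T a) (U \<inter> G a))"
proof (intro iffI conjI ballI)
  assume U: "openin T_union U"
  then show "U \<subseteq> G_union"
    using openin_subset[OF U] by simp
  fix a assume a: "a \<in> I"
  have "openin (T a) {x \<in> topspace (T a). id x \<in> U}"
    using continuous_map_stage_inclusion[OF a] U unfolding continuous_map_def by blast
  moreover have "{x \<in> topspace (T a). id x \<in> U} = U \<inter> G a"
    using topspace_T[OF a] by auto
  ultimately show "openin (T a) (U \<inter> G a)"
    by simp
next
  assume U: "U \<subseteq> G_union \<and> (\<forall>a\<in>I. openin (T a) (U \<inter> G a))"
  have "closedin T_union (G_union - U)"
    unfolding Metric_space.metric_closedin_iff_sequentially_closed[OF Metric_space_limsup_metric]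
  proof (intro conjI allI impI)
    fix \<sigma> l assume \<sigma>: "range \<sigma> \<subseteq> G_union - U \<and> limitin T_union \<sigma> l sequentially"
    then obtain v where v: "v \<in> I" "limitin (T v) \<sigma> l sequentially"
      using eventually_tail_exists[OF limitin_eventually_stage] by blast
    have "l \<notin> U"
    proof
      assume "l \<in> U"
      moreover have "l \<in> G v"
        using limitin_topspace[OF v(2)] topspace_T[OF v(1)] by simp
      ultimately have "eventually (\<lambda>n. \<sigma> n \<in> U \<inter> G v) sequentially"
        using v U unfolding limitin_def by blast
      with \<sigma> show False
        by (auto simp: image_subset_iff dest: eventually_happens)
    qed
    then show "l \<in> G_union - U"
      using \<sigma> Metric_space.limitin_mspace[OF Metric_space_limsup_metric] by blast
  qed auto
  then show "openin T_union U"
    using U by (simp add: openin_closedin_eq Diff_Diff_Int Int_absorb1)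
qed

lemma colimit_topology_eq_mtopology: "colimit_topology I T = T_union"
proof -
  have "openin T_union = (\<lambda>U. U \<subseteq> (\<Union>a\<in>I. topspace (T a))
      \<and> (\<forall>a\<in>I. openin (T a) (U \<inter> topspace (T a))))"
    by (simp add: openin_limsup_metric_iff topspace_T fun_eq_iff cong: SUP_cong)
  then show ?thesis
    unfolding colimit_topology_def by (metis openin_inverse)
qed

end


locale long_Lipschitz_group_family = long_Lipschitz_family I le G d L
  for I :: "'i set" and le and G :: "'i \<Rightarrow> 'g::group_add set" and d L +
  assumes topgrp: "\<And>a. a \<in> I \<Longrightarrow> topological_group_on (Metric_space.mtopology (G a) (d a))"
begin

lemma subgroup_add_stage: "a \<in> I \<Longrightarrow> subgroup_add (G a)"
  using topgrp topspace_T by (simp add: topological_group_on_def)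

lemma add_mem_G_union: "x \<in> G_union \<Longrightarrow> y \<in> G_union \<Longrightarrow> x + y \<in> G_union"
proof -
  assume "x \<in> G_union" "y \<in> G_union"
  then obtain b where b: "b \<in> I" "x \<in> G b" "y \<in> G b"
    using eventually_tail_exists[OF eventually_tail_mem2] by blast
  then have "x + y \<in> G b"
    using subgroup_add_stage[OF b(1)] unfolding subgroup_add_def by blast
  with b(1) show ?thesis
    by blast
qed

lemma uminus_mem_G_union: "x \<in> G_union \<Longrightarrow> - x \<in> G_union"
  using subgroup_add_stage unfolding subgroup_add_def by blast

lemma subgroup_add_G_union: "subgroup_add G_union"
proof -
  obtain a where "a \<in> I"
    using dir unfolding directed_index_def by blast
  then have "0 \<in> G_union"
    using subgroup_add_stage unfolding subgroup_add_def by blast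
  then show ?thesis
    unfolding subgroup_add_def using add_mem_G_union uminus_mem_G_union by blast
qed

lemma continuous_map_limsup_uminus: "continuous_map T_union T_union uminus"
proof (rule Metric_space.continuous_map_from_mtopology_sequentially[OF Metric_space_limsup_metric])
  show "uminus \<in> G_union \<rightarrow> topspace T_union"
    using uminus_mem_G_union by simp
  fix \<sigma> l assume "limitin T_union \<sigma> l sequentially"
  then obtain v where v: "v \<in> I" "limitin (T v) \<sigma> l sequentially"
    using eventually_tail_exists[OF limitin_eventually_stage] by blast
  have neg: "continuous_map (T v) (T v) uminus"
    using topgrp[OF v(1)] by (simp add: topological_group_on_def)
  show "limitin T_union (uminus \<circ> \<sigma>) (- l) sequentially"
    by (rule limitin_stage_imp_limitin[OF v(1) continuous_map_limit[OF neg v(2)]])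
qed

lemma continuous_map_limsup_add:
  "continuous_map (prod_topology T_union T_union) T_union (\<lambda>(x, y). x + y)"
proof -
  interpret P: Metric_space12 G_union D G_union D
    by (simp add: Metric_space12_def Metric_space_limsup_metric)
  show ?thesis
    unfolding P.mtopology_prod_metric[symmetric]
  proof (rule P.Prod_metric.continuous_map_from_mtopology_sequentially)
    show "(\<lambda>(x, y). x + y) \<in> G_union \<times> G_union \<rightarrow> topspace T_union"
      using add_mem_G_union by auto
    fix \<sigma> l assume "limitin P.Prod_metric.mtopology \<sigma> l sequentially"
    then have "limitin T_union (fst \<circ> \<sigma>) (fst l) sequentially"
      "limitin T_union (snd \<circ> \<sigma>) (snd l) sequentially"
      unfolding P.mtopology_prod_metric limitin_pairwise by blast+
    then obtain v where v: "v \<in> I" "limitin (T v) (fst \<circ> \<sigma>) (fst l) sequentially"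
      "limitin (T v) (snd \<circ> \<sigma>) (snd l) sequentially"
      using eventually_tail_exists[OF eventually_tail_conj[OF limitin_eventually_stage limitin_eventually_stage]]
      by blast
    then have lim: "limitin (prod_topology (T v) (T v)) \<sigma> l sequentially"
      by (simp add: limitin_pairwise)
    have add: "continuous_map (prod_topology (T v) (T v)) (T v) (\<lambda>(x, y). x + y)"
      using topgrp[OF v(1)] by (simp add: topological_group_on_def)
    show "limitin T_union ((\<lambda>(x, y). x + y) \<circ> \<sigma>) ((\<lambda>(x, y). x + y) l) sequentially"
      by (rule limitin_stage_imp_limitin[OF v(1) continuous_map_limit[OF add lim]])
  qed
qed

lemma topological_group_on_limsup_metric: "topological_group_on T_union"
  using subgroup_add_G_union continuous_map_limsup_add continuous_map_limsup_uminus
  by (simp add: topological_group_on_def)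

lemma ACP_family: "ACP I T"
proof -
  have G_union_eq: "(\<Union>a\<in>I. topspace (T a)) = G_union"
    by (simp add: topspace_T)
  have finest: "openin T_union U"
    if S: "topspace S = G_union" "\<forall>a\<in>I. continuous_map (T a) S id" "openin S U" for S U
    unfolding openin_limsup_metric_iff
  proof (intro conjI ballI)
    show "U \<subseteq> G_union"
      using S openin_subset by blast
    fix a assume a: "a \<in> I"
    have "openin (T a) {x \<in> topspace (T a). id x \<in> U}"
      using S a by (auto simp: continuous_map_def)
    moreover have "{x \<in> topspace (T a). id x \<in> U} = U \<inter> G a"
      using topspace_T[OF a] by auto
    ultimately show "openin (T a) (U \<inter> G a)"
      by simp
  qed
  show ?thesis
    unfolding ACP_def Let_def colimit_topology_eq_mtopology G_union_eq
    using topological_group_on_limsup_metric continuous_map_stage_inclusion finest by auto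
qed

end

theorem corollary2p10:
  fixes I :: "'i set" and le :: "'i \<Rightarrow> 'i \<Rightarrow> bool"
    and G :: "'i \<Rightarrow> 'g::group_add set" and d :: "'i \<Rightarrow> 'g \<Rightarrow> 'g \<Rightarrow> real" and L :: real
  assumes dir: "directed_index I le"
    and long: "long_index I le"
    and metric: "\<And>a. a \<in> I \<Longrightarrow> Metric_space (G a) (d a)"
    and topgrp: "\<And>a. a \<in> I \<Longrightarrow> topological_group_on (Metric_space.mtopology (G a) (d a))"
    and mono: "\<And>a b. a \<in> I \<Longrightarrow> b \<in> I \<Longrightarrow> le a b \<Longrightarrow> G a \<subseteq> G b"
    and strict: "\<And>a b. a \<in> I \<Longrightarrow> b \<in> I \<Longrightarrow> le a b \<Longrightarrow>
       subtopology (Metric_space.mtopology (G b) (d b)) (G a) = Metric_space.mtopology (G a) (d a)"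
    and Lpos: "L > 0"
    and lip: "\<And>a b x y. a \<in> I \<Longrightarrow> b \<in> I \<Longrightarrow> le a b \<Longrightarrow> x \<in> G a \<Longrightarrow> y \<in> G a \<Longrightarrow>
       d b x y \<le> L * d a x y"
  shows "ACP I (\<lambda>a. Metric_space.mtopology (G a) (d a))
     \<and> Metric_space (\<Union>a\<in>I. G a) (limsup_metric I le G d)
     \<and> Metric_space.mtopology (\<Union>a\<in>I. G a) (limsup_metric I le G d)
         = colimit_topology I (\<lambda>a. Metric_space.mtopology (G a) (d a))"
proof -
  interpret long_Lipschitz_group_family I le G d L
    using dir long metric mono lip topgrp
    by (simp add: long_Lipschitz_group_family_def long_Lipschitz_family_def
        long_Lipschitz_group_family_axioms_def)
  show ?thesis
    by (simp add: ACP_family Metric_space_limsup_metric colimit_topology_eq_mtopology)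
qed

end
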